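(* Suppose $\mathbf x$ and $\mathbf y$ are clusters (parts) in possibly different cluster decompositions of the same $\mathbf z$. Then either $\mathbf x$ and $\mathbf y$ are disjoint, or one contains the other.
   Context: $M$ is a smooth Riemannian manifold with distance $\mathrm{dist}$, with $r_{conv}>0$ the infimum of the convexity radius. Configurations lie in $\mathrm{Sym}^n(M)$ (unordered tuples with multiplicity), $|\mathbf z|$ is the number of points, $+$ is union with multiplicity. $\mathbf z$ is pre-confined if $\mathrm{dist}(z_i,z_j)<r_{conv}$ for all $i,j$; then $c(\mathbf z)$ is the unique minimizer of $\sum_i\mathrm{dist}(z_i,z)^2$ on $\bigcap_iB_\rho(z_i)$ for $\max\mathrm{dist}(z_i,z_j)<\rho<r_{conv}$, and $r(\mathbf z)=\max_i\mathrm{dist}(z_i,c(\mathbf z))$. A fixed clustering rule is $0<r_1<\dots<r_N\ll r_{conv}$, $0=d_1<\dots<d_N\ll r_{conv}$ with $r_k>d_k+r_{k-1}$, $d_k>6r_{k-1}$. $\mathbf z$ is confined if pre-confined and $r(\mathbf z)<r_{|\mathbf z|}$; $\mathbf z_1,\mathbf z_2$ are separated if pre-confined with $\mathrm{dist}(c(\mathbf z_1),c(\mathbf z_2))>d_{|\mathbf z_1|+|\mathbf z_2|}$; a cluster decomposition $\mathbf z=\sum\mathbf z_i$ has all parts confined and pairwise separated. In any cluster decomposition of $\mathbf z=\sum n_iz_i$ (distinct $z_i$), a cluster containing $z_i$ contains it with its full multiplicity $n_i$, so intersections and containments of clusters from different decompositions of $\mathbf z$ are unambiguous sub-multisets of $\mathbf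 z$. *)

theory Defs
  imports "HOL-Analysis.Analysis" "HOL-Library.Multiset"
begin

(* Configurations are finite multisets of points of a metric space 'a.
   rc plays the role of r_conv. *)

definition pre_confined :: "real \<Rightarrow> 'a::metric_space multiset \<Rightarrow> bool" where
  "pre_confined rc z \<longleftrightarrow> (\<forall>a\<in>#z. \<forall>b\<in>#z. dist a b < rc)"

definition max_pdist :: "'a::metric_space multiset \<Rightarrow> real" where
  "max_pdist z = Max {dist a b | a b. a \<in># z \<and> b \<in># z}"

definition sqdist_sum :: "'a::metric_space multiset \<Rightarrow> 'a \<Rightarrow> real" where
  "sqdist_sum z q = sum_mset (image_mset (\<lambda>a. (dist a q)^2) z)"

definition is_ball_minimizer :: "'a::metric_space multiset \<Rightarrow> real \<Rightarrow> 'a \<Rightarrow> bool" where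
  "is_ball_minimizer z \<rho> p \<longleftrightarrow>
     p \<in> (\<Inter>a\<in>set_mset z. ball a \<rho>) \<and>
     (\<forall>q\<in>(\<Inter>a\<in>set_mset z. ball a \<rho>). sqdist_sum z p \<le> sqdist_sum z q)"

definition center :: "real \<Rightarrow> 'a::metric_space multiset \<Rightarrow> 'a" where
  "center rc z = (THE p. \<forall>\<rho>. max_pdist z < \<rho> \<and> \<rho> < rc \<longrightarrow> is_ball_minimizer z \<rho> p)"

definition cradius :: "real \<Rightarrow> 'a::metric_space multiset \<Rightarrow> real" where
  "cradius rc z = Max ((\<lambda>a. dist a (center rc z)) ` set_mset z)"

(* fixed clustering rule 0<r_1<...<r_N, 0=d_1<...<d_N, r_k>d_k+r_{k-1}, d_k>6 r_{k-1},
   with r_N, d_N < r_conv (the informal "<< r_conv") *)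
definition clustering_rule :: "real \<Rightarrow> (nat \<Rightarrow> real) \<Rightarrow> (nat \<Rightarrow> real) \<Rightarrow> nat \<Rightarrow> bool" where
  "clustering_rule rc r d N \<longleftrightarrow> N \<ge> 1 \<and>
     0 < r 1 \<and> d 1 = 0 \<and>
     (\<forall>k. 2 \<le> k \<and> k \<le> N \<longrightarrow> r (k-1) < r k \<and> d (k-1) < d k \<and>
                               r k > d k + r (k-1) \<and> d k > 6 * r (k-1)) \<and>
     r N < rc \<and> d N < rc"

definition confined :: "real \<Rightarrow> (nat \<Rightarrow> real) \<Rightarrow> nat \<Rightarrow> 'a::metric_space multiset \<Rightarrow> bool" where
  "confined rc r N z \<longleftrightarrow> pre_confined rc z \<and> 1 \<le> size z \<and> size z \<le> N \<and>
      cradius rc z < r (size z)"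

definition separated :: "real \<Rightarrow> (nat \<Rightarrow> real) \<Rightarrow> nat \<Rightarrow> 'a::metric_space multiset \<Rightarrow> 'a multiset \<Rightarrow> bool" where
  "separated rc d N z1 z2 \<longleftrightarrow> pre_confined rc z1 \<and> pre_confined rc z2 \<and>
      size z1 + size z2 \<le> N \<and>
      dist (center rc z1) (center rc z2) > d (size z1 + size z2)"

(* a cluster decomposition of z, given as a list of parts (indexed, so repeated parts are distinct parts) *)
definition cluster_decomp :: "real \<Rightarrow> (nat \<Rightarrow> real) \<Rightarrow> (nat \<Rightarrow> real) \<Rightarrow> nat \<Rightarrow>
    'a::metric_space multiset \<Rightarrow> 'a multiset list \<Rightarrow> bool" where
  "cluster_decomp rc r d N z xs \<longleftrightarrow> sum_list xs = z \<and>
     (\<forall>i<length xs. confined rc r N (xs ! i)) \<and>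
     (\<forall>i<length xs. \<forall>j<length xs. i \<noteq> j \<longrightarrow> separated rc d N (xs ! i) (xs ! j))"

(* abstraction of the Riemannian fact: below the convexity radius the minimizer exists and is unique *)
definition convexity_radius_property :: "real \<Rightarrow> 'a::metric_space itself \<Rightarrow> bool" where
  "convexity_radius_property rc _ \<longleftrightarrow> 0 < rc \<and>
     (\<forall>z::'a multiset. z \<noteq> {#} \<and> pre_confined rc z \<longrightarrow>
        (\<forall>\<rho>. max_pdist z < \<rho> \<and> \<rho> < rc \<longrightarrow> (\<exists>!p. is_ball_minimizer z \<rho> p)))"

end

theory Submission
  imports Defs
begin

text \<open>Suppose the cluster \<open>x\<close> meets the cluster \<open>y\<close>, is not larger than it, and is not contained
  in it. Then some point of \<open>x\<close> lies in another part \<open>y'\<close> of the decomposition containing \<open>y\<close>, so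
  the centres of \<open>y\<close> and \<open>y'\<close> are joined by a path of four radii through the centre of \<open>x\<close>.
  Each radius is at most \<open>r (n - 1)\<close> for \<open>n = size y + size y'\<close>, while separation demands
  distance more than \<open>d n > 6 * r (n - 1)\<close>. Only the triangle inequality is used.\<close>

lemma sum_list_conv_nth_plus_others:
  fixes ys :: "'b::comm_monoid_add list"
  assumes "i < length ys"
  shows "sum_list ys = ys ! i + (\<Sum>j\<in>{0..<length ys} - {i}. ys ! j)"
  using assms by (simp add: sum_list_sum_nth sum.remove)

lemma nth_subset_mset_sum_list:
  assumes "i < length ys"
  shows "ys ! i \<subseteq># sum_list ys"
  by (subst sum_list_conv_nth_plus_others[OF assms]) simp

lemma in_other_nth_if_count_nth_less_sum_list:
  assumes "i < length ys" and "count (ys ! i) a < count (sum_list ys) a"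
  shows "\<exists>j<length ys. j \<noteq> i \<and> a \<in># ys ! j"
proof -
  let ?others = "\<Sum>j\<in>{0..<length ys} - {i}. ys ! j"
  have "a \<in># ?others"
    using assms by (subst (asm) sum_list_conv_nth_plus_others) auto
  then show ?thesis
    by (auto simp: set_mset_sum)
qed

lemma clustering_rule_radius_mono:
  assumes R: "clustering_rule rc r d N" and "1 \<le> i" and "i \<le> j" and "j \<le> N"
  shows "r i \<le> r j"
  using \<open>i \<le> j\<close> \<open>j \<le> N\<close>
proof (induction j rule: dec_induct)
  case base
  then show ?case by simp
next
  case (step k)
  have "r k < r (Suc k)"
    using R step.hyps step.prems \<open>1 \<le> i\<close> unfolding clustering_rule_def
    by (metis diff_Suc_1 le_SucI Suc_le_mono le_trans one_add_one plus_1_eq_Suc)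
  then show ?case using step by simp
qed

lemma clustering_rule_radius_pos:
  assumes "clustering_rule rc r d N" and "1 \<le> i" and "i \<le> N"
  shows "0 < r i"
  using clustering_rule_radius_mono[OF assms(1) order_refl assms(2,3)] assms(1)
  unfolding clustering_rule_def by linarith

lemma dist_center_less_if_confined:
  assumes "confined rc r N w" and "q \<in># w"
  shows "dist q (center rc w) < r (size w)"
proof -
  have "dist q (center rc w) \<le> cradius rc w"
    unfolding cradius_def using assms(2) by (intro Max_ge) auto
  then show ?thesis
    using assms(1) unfolding confined_def by linarith
qed

lemma confined_not_meets_both_separated:
  assumes R: "clustering_rule rc r d N"
    and cx: "confined rc r N x" and cy: "confined rc r N y" and cy': "confined rc r N y'"
    and sep: "separated rc d N y y'"
    and size_le: "size x \<le> size y"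
    and "p \<in># x" "p \<in># y" and "a \<in># x" "a \<in># y'"
  shows False
proof -
  define n where "n = size y + size y'"
  have n: "n \<le> N" "d n < dist (center rc y) (center rc y')"
    using sep unfolding separated_def n_def by auto
  have sizes: "1 \<le> size x" "1 \<le> size y" "1 \<le> size y'"
    using cx cy cy' unfolding confined_def by auto
  have radii: "r (size x) \<le> r (n - 1)" "r (size y) \<le> r (n - 1)" "r (size y') \<le> r (n - 1)"
    using clustering_rule_radius_mono[OF R] sizes size_le n(1) unfolding n_def by auto
  have "0 < r (n - 1)" and "6 * r (n - 1) < d n"
    using clustering_rule_radius_pos[OF R, of "n - 1"] R sizes n(1)
    unfolding clustering_rule_def n_def by auto
  have "dist (center rc y) (center rc y')
      \<le> dist (center rc y) (center rc x) + dist (center rc x) (center rc y')"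
    by (rule dist_triangle)
  also have "\<dots> \<le> (dist p (center rc y) + dist p (center rc x))
                  + (dist a (center rc x) + dist a (center rc y'))"
    by (intro add_mono dist_triangle3)
  also have "\<dots> < r (size y) + r (size x) + r (size x) + r (size y')"
    using dist_center_less_if_confined[OF cy \<open>p \<in># y\<close>] dist_center_less_if_confined[OF cx \<open>p \<in># x\<close>]
      dist_center_less_if_confined[OF cx \<open>a \<in># x\<close>] dist_center_less_if_confined[OF cy' \<open>a \<in># y'\<close>]
    by linarith
  finally show False
    using n(2) radii \<open>0 < r (n - 1)\<close> \<open>6 * r (n - 1) < d n\<close> by linarith
qed

lemma cluster_subset_if_meets_and_not_larger:
  assumes R: "clustering_rule rc r d N"
    and X: "cluster_decomp rc r d N z xs" and Y: "cluster_decomp rc r d N z ys"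
    and "x \<in> set xs" and "y \<in> set ys"
    and size_le: "size x \<le> size y" and meets: "x \<inter># y \<noteq> {#}"
  shows "x \<subseteq># y"
proof (rule ccontr)
  assume "\<not> x \<subseteq># y"
  then obtain a where a: "count y a < count x a"
    by (meson not_le subseteq_mset_def)
  obtain k where k: "k < length xs" "xs ! k = x"
    using \<open>x \<in> set xs\<close> by (meson in_set_conv_nth)
  obtain i where i: "i < length ys" "ys ! i = y"
    using \<open>y \<in> set ys\<close> by (meson in_set_conv_nth)
  obtain p where "p \<in># x" "p \<in># y"
    using meets by (metis multiset_nonemptyE Multiset.inter_iff)
  have "x \<subseteq># sum_list ys"
    using nth_subset_mset_sum_list[OF k(1)] k(2) X Y unfolding cluster_decomp_def by simp
  then have "count y a < count (sum_list ys) a"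
    using a by (meson order.strict_trans2 subseteq_mset_def)
  then obtain j where j: "j < length ys" "j \<noteq> i" "a \<in># ys ! j"
    using in_other_nth_if_count_nth_less_sum_list[OF i(1)] i(2) by blast
  have "a \<in># x"
    using a by (simp flip: count_greater_zero_iff)
  moreover have "confined rc r N x"
    using X k unfolding cluster_decomp_def by auto
  moreover have "confined rc r N y" "confined rc r N (ys ! j)" "separated rc d N y (ys ! j)"
    using Y i j unfolding cluster_decomp_def by auto
  ultimately show False
    using confined_not_meets_both_separated[OF R] size_le \<open>p \<in># x\<close> \<open>p \<in># y\<close> j(3) by blast
qed

theorem lemma2p11:
  fixes rc :: real and r d :: "nat \<Rightarrow> real" and N :: nat
    and z x y :: "'a::metric_space multiset" and xs ys :: "'a multiset list"
  assumes "convexity_radius_property rc TYPE('a)"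
    and "clustering_rule rc r d N"
    and "cluster_decomp rc r d N z xs"
    and "cluster_decomp rc r d N z ys"
    and "x \<in> set xs" and "y \<in> set ys"
  shows "x \<inter># y = {#} \<or> x \<subseteq># y \<or> y \<subseteq># x"
proof (cases "size x \<le> size y")
  case True
  then show ?thesis
    using cluster_subset_if_meets_and_not_larger[OF assms(2-6)] by blast
next
  case False
  then show ?thesis
    using cluster_subset_if_meets_and_not_larger[OF assms(2,4,3,6,5)]
    by (metis subset_mset.inf_commute nat_le_linear)
qed

end
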